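(* Let $\mathcal{G}$ be a network with non-monitor set $N$ and set of measurement paths $P$, and let $S\subseteq N$ be nonempty. Then $\Omega(S)=\min_{v\in S}\Omega(v)$.
   Context: $\mathcal{G}$ is a finite connected undirected graph whose node set is partitioned into monitors $M$ and non-monitors $N$; $P$ is an arbitrary set of measurement paths (each a sequence of nodes of $\mathcal{G}$). A failure set is any $F\subseteq N$; a path fails iff it traverses a node of $F$. $P_F$ is the set of paths in $P$ traversing at least one node of $F$; $F_1,F_2$ are distinguishable iff $P_{F_1}\ne P_{F_2}$. For $S\subseteq N$ and integer $k\ge0$, $S$ is $k$-identifiable if any two failure sets $F_1,F_2$ with $|F_1|,|F_2|\le k$ and $F_1\cap S\ne F_2\cap S$ are distinguishable. $\Omega(S)$ is the maximum $k\in\{0,\dots,|N|\}$ such that $S$ is $k$-identifiable, and $\Omega(v):=\Omega(\{v\})$. *)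

theory Defs
  imports Main
begin

definition network :: "'a set \<Rightarrow> 'a rel \<Rightarrow> 'a set \<Rightarrow> 'a set \<Rightarrow> 'a list set \<Rightarrow> bool" where
  "network V E M N P \<longleftrightarrow>
     finite V \<and> E \<subseteq> V \<times> V \<and> sym E \<and>
     (\<forall>u\<in>V. \<forall>v\<in>V. (u, v) \<in> E\<^sup>*) \<and>
     M \<union> N = V \<and> M \<inter> N = {} \<and>
     (\<forall>p\<in>P. set p \<subseteq> V)"

definition failed_paths :: "'a list set \<Rightarrow> 'a set \<Rightarrow> 'a list set" where
  "failed_paths P F = {p \<in> P. \<exists>v\<in>set p. v \<in> F}"

definition distinguishable :: "'a list set \<Rightarrow> 'a set \<Rightarrow> 'a set \<Rightarrow> bool" where
  "distinguishable P F1 F2 \<longleftrightarrow> failed_paths P F1 \<noteq> failed_paths P F2"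

definition k_identifiable :: "'a set \<Rightarrow> 'a list set \<Rightarrow> 'a set \<Rightarrow> nat \<Rightarrow> bool" where
  "k_identifiable N P S k \<longleftrightarrow>
     (\<forall>F1 F2. F1 \<subseteq> N \<longrightarrow> F2 \<subseteq> N \<longrightarrow> card F1 \<le> k \<longrightarrow> card F2 \<le> k \<longrightarrow>
        F1 \<inter> S \<noteq> F2 \<inter> S \<longrightarrow> distinguishable P F1 F2)"

definition Omega :: "'a set \<Rightarrow> 'a list set \<Rightarrow> 'a set \<Rightarrow> nat" where
  "Omega N P S = Max {k. k \<le> card N \<and> k_identifiable N P S k}"

end

theory Submission
  imports Defs
begin

text \<open>Identifiability of S is the conjunction of the identifiability of its points, and
  k-identifiability is downward closed in k. Hence for k \<le> |N| the condition k \<le> \<Omega>(S)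
  says that every point of S is k-identifiable, i.e. that k \<le> \<Omega>(v) for all v \<in> S,
  and \<Omega>(S) and the minimum have the same lower bounds.\<close>

lemma k_identifiable_mono:
  "k_identifiable N P S k \<Longrightarrow> j \<le> k \<Longrightarrow> k_identifiable N P S j"
  unfolding k_identifiable_def by (meson le_trans)

lemma k_identifiable_iff_singletons:
  "k_identifiable N P S k \<longleftrightarrow> (\<forall>v\<in>S. k_identifiable N P {v} k)"
  unfolding k_identifiable_def by blast

lemma k_identifiable_0: "finite N \<Longrightarrow> k_identifiable N P S 0"
  unfolding k_identifiable_def by (auto dest: finite_subset)

lemma Omega_mem:
  assumes "finite N"
  shows "Omega N P S \<in> {k. k \<le> card N \<and> k_identifiable N P S k}"
  unfolding Omega_def by (rule Max_in) (auto intro: k_identifiable_0[OF assms])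

lemma Omega_le_card: "finite N \<Longrightarrow> Omega N P S \<le> card N"
  using Omega_mem by blast

lemma k_identifiable_Omega: "finite N \<Longrightarrow> k_identifiable N P S (Omega N P S)"
  using Omega_mem by blast

lemma le_Omega_iff:
  assumes "finite N" and "k \<le> card N"
  shows "k \<le> Omega N P S \<longleftrightarrow> k_identifiable N P S k"
proof
  assume "k \<le> Omega N P S"
  then show "k_identifiable N P S k"
    using k_identifiable_Omega[OF assms(1)] k_identifiable_mono by blast
next
  assume "k_identifiable N P S k"
  then show "k \<le> Omega N P S"
    unfolding Omega_def using assms(2) by (intro Max_ge) auto
qed

lemma le_Omega_iff_singletons:
  assumes "finite N" and "k \<le> card N"
  shows "k \<le> Omega N P S \<longleftrightarrow> (\<forall>v\<in>S. k \<le> Omega N P {v})"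
proof -
  have "k \<le> Omega N P {v} \<longleftrightarrow> k_identifiable N P {v} k" for v
    using assms by (rule le_Omega_iff)
  then show ?thesis
    using le_Omega_iff[OF assms, of P S] k_identifiable_iff_singletons[of N P S k] by simp
qed

theorem proposition1:
  fixes V M N :: "'a set" and E :: "'a rel" and P :: "'a list set" and S :: "'a set"
  assumes "network V E M N P"
    and "S \<subseteq> N" and "S \<noteq> {}"
  shows "Omega N P S = Min ((\<lambda>v. Omega N P {v}) ` S)"
proof -
  have "finite N" using assms(1) unfolding network_def by (metis finite_Un)
  moreover have "finite S" using \<open>finite N\<close> assms(2) finite_subset by blast
  ultimately have same_lower_bounds:
    "k \<le> Omega N P S \<longleftrightarrow> k \<le> Min ((\<lambda>v. Omega N P {v}) ` S)" if "k \<le> card N" for k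
    using that assms(3) by (simp add: le_Omega_iff_singletons[of N k P S])
  obtain v where "v \<in> S" using assms(3) by blast
  have "Min ((\<lambda>v. Omega N P {v}) ` S) \<le> Omega N P {v}"
    using \<open>finite S\<close> \<open>v \<in> S\<close> by simp
  also have "\<dots> \<le> card N"
    using \<open>finite N\<close> by (rule Omega_le_card)
  finally have "Min ((\<lambda>v. Omega N P {v}) ` S) \<le> Omega N P S"
    using same_lower_bounds by blast
  moreover have "Omega N P S \<le> Min ((\<lambda>v. Omega N P {v}) ` S)"
    using same_lower_bounds Omega_le_card[OF \<open>finite N\<close>] by blast
  ultimately show ?thesis by linarith
qed

end
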